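(* Let $f \in \mathbb{N}_0[x^{\pm 1}]$ be such that $f(1) = p + q$ for some prime numbers $p$ and $q$. Then $f$ can be written as the sum of two irreducible elements of $\mathbb{N}_0[x^{\pm 1}]$.
   Context: $\mathbb{N}_0[x^{\pm 1}]$ denotes the semiring of Laurent polynomials in $x$ with nonnegative integer coefficients. Its units are exactly the monomials $x^k$, $k \in \mathbb{Z}$. An element $f$ is irreducible if it is nonzero, not a unit, and whenever $f = gh$ with $g,h \in \mathbb{N}_0[x^{\pm 1}]$, one of $g,h$ is a unit. *)

theory Defs
  imports "HOL-Library.Poly_Mapping" "HOL-Computational_Algebra.Factorial_Ring"
    "HOL-Computational_Algebra.Primes"
begin

text \<open>The semiring N0[x^{+-1}] of Laurent polynomials with nonnegative integer
  coefficients: finitely supported maps from exponents (int) to coefficients (nat),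
  with convolution product (library instance comm_semiring_1).\<close>
type_synonym laurent_nat = "int \<Rightarrow>\<^sub>0 nat"

definition eval_at_one :: "laurent_nat \<Rightarrow> nat" where
  "eval_at_one f = (\<Sum>k\<in>Poly_Mapping.keys f. Poly_Mapping.lookup f k)"

end

theory Submission
  imports Defs
begin

text \<open>Evaluation at 1 is a semiring homomorphism onto the naturals, so its value on a unit is 1
  and an element whose value is a prime admits no nontrivial factorisation. Conversely an element
  of value 1 is a monomial, hence a unit. Splitting the coefficients of f into two parts whose
  sums are p and q therefore writes f as a sum of two irreducibles.\<close>

lemma add_single_induct [case_names zero add_single]:
  assumes "P 0"
    and "\<And>f a b. a \<notin> Poly_Mapping.keys f \<Longrightarrow> P f \<Longrightarrow> P (f + Poly_Mapping.single a b)"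
  shows "P f"
proof (induction f rule: update_induct)
  case const
  show ?case using assms(1) .
next
  case (update f a b)
  have "Poly_Mapping.update a b f = f + Poly_Mapping.single a b"
    using update.hyps(1)
    by (intro poly_mapping_eqI) (auto simp: lookup_update lookup_add lookup_single in_keys_iff when_def)
  then show ?case using assms(2) update by simp
qed

lemma eval_at_one_eq_sum:
  assumes "finite S" and "Poly_Mapping.keys f \<subseteq> S"
  shows "eval_at_one f = (\<Sum>k\<in>S. Poly_Mapping.lookup f k)"
  unfolding eval_at_one_def using assms
  by (intro sum.mono_neutral_left) (auto simp: in_keys_iff)

lemma eval_at_one_zero [simp]: "eval_at_one 0 = 0"
  by (simp add: eval_at_one_def)

lemma eval_at_one_single [simp]: "eval_at_one (Poly_Mapping.single k v) = v"
  by (cases "v = 0") (auto simp: eval_at_one_def)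

lemma eval_at_one_one [simp]: "eval_at_one 1 = 1"
  by (simp flip: single_one)

lemma eval_at_one_add [simp]: "eval_at_one (f + g) = eval_at_one f + eval_at_one g"
proof -
  let ?S = "Poly_Mapping.keys f \<union> Poly_Mapping.keys g"
  have "eval_at_one (f + g) = (\<Sum>k\<in>?S. Poly_Mapping.lookup f k + Poly_Mapping.lookup g k)"
    using keys_add[of f g] by (subst eval_at_one_eq_sum[of ?S]) (auto simp: lookup_add)
  also have "\<dots> = eval_at_one f + eval_at_one g"
    by (simp add: sum.distrib eval_at_one_eq_sum[of ?S])
  finally show ?thesis .
qed

lemma eval_at_one_single_mult:
  "eval_at_one (Poly_Mapping.single a b * g) = b * eval_at_one g"
  by (induction g rule: add_single_induct) (simp_all add: distrib_left mult_single)

lemma eval_at_one_mult [simp]: "eval_at_one (f * g) = eval_at_one f * eval_at_one g"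
  by (induction f rule: add_single_induct)
     (simp_all add: distrib_right eval_at_one_single_mult)

lemma eval_at_one_split:
  assumes "n \<le> eval_at_one f"
  shows "\<exists>g h. f = g + h \<and> eval_at_one g = n"
  using assms
proof (induction f arbitrary: n rule: add_single_induct)
  case zero
  then show ?case by (intro exI[of _ 0]) simp
next
  case (add_single f a b)
  show ?case
  proof (cases "n \<le> eval_at_one f")
    case True
    with add_single.IH obtain g h where "f = g + h" "eval_at_one g = n" by blast
    then show ?thesis
      by (intro exI[of _ g] exI[of _ "h + Poly_Mapping.single a b"]) (simp add: add.assoc)
  next
    case False
    define m where "m = n - eval_at_one f"
    have "m \<le> b" and n: "n = eval_at_one f + m"
      using False add_single.prems by (auto simp: m_def)
    then have "Poly_Mapping.single a b = Poly_Mapping.single a m + Poly_Mapping.single a (b - m)"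
      by (simp flip: single_add)
    then show ?thesis
      by (intro exI[of _ "f + Poly_Mapping.single a m"] exI[of _ "Poly_Mapping.single a (b - m)"])
         (simp add: add.assoc n)
  qed
qed

lemma eval_at_one_eq_1_imp_single:
  assumes "eval_at_one f = 1"
  shows "\<exists>k. f = Poly_Mapping.single k 1"
proof -
  obtain k where k: "k \<in> Poly_Mapping.keys f"
    using assms by (fastforce simp: eval_at_one_def)
  have "Poly_Mapping.lookup f k + (\<Sum>j\<in>Poly_Mapping.keys f - {k}. Poly_Mapping.lookup f j) = 1"
    using assms k by (simp add: eval_at_one_def sum.remove)
  moreover have "Poly_Mapping.lookup f k > 0"
    using k by (simp add: in_keys_iff)
  ultimately have coeff_k: "Poly_Mapping.lookup f k = 1"
    and "(\<Sum>j\<in>Poly_Mapping.keys f - {k}. Poly_Mapping.lookup f j) = 0"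
    by linarith+
  then have "Poly_Mapping.keys f - {k} = {}"
    by (auto simp: in_keys_iff)
  with coeff_k have "f = Poly_Mapping.single k 1"
    by (intro poly_mapping_eqI) (auto simp: lookup_single when_def in_keys_iff)
  then show ?thesis ..
qed

lemma dvd_one_iff_eval_at_one_eq_1: "f dvd 1 \<longleftrightarrow> eval_at_one f = 1"
proof
  assume "f dvd 1"
  then obtain u where "1 = f * u" ..
  then have "eval_at_one f * eval_at_one u = 1"
    by (metis eval_at_one_mult eval_at_one_one)
  then show "eval_at_one f = 1" by simp
next
  assume "eval_at_one f = 1"
  then obtain k where "f = Poly_Mapping.single k 1"
    using eval_at_one_eq_1_imp_single by blast
  then have "1 = f * Poly_Mapping.single (- k) 1"
    by (simp add: mult_single flip: single_one)
  then show "f dvd 1" ..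
qed

lemma irreducible_if_prime_eval_at_one:
  assumes "prime (eval_at_one f)"
  shows "irreducible f"
  unfolding irreducible_def
proof (intro conjI allI impI)
  show "f \<noteq> 0" and "\<not> f dvd 1"
    using assms by (auto simp: dvd_one_iff_eval_at_one_eq_1)
next
  fix a b
  assume "f = a * b"
  then have "prime (eval_at_one a * eval_at_one b)" using assms by simp
  then show "a dvd 1 \<or> b dvd 1"
    by (metis dvd_one_iff_eval_at_one_eq_1 prime_product)
qed

theorem corollary2p2:
  fixes f :: laurent_nat and p q :: nat
  assumes "prime p" and "prime q" and "eval_at_one f = p + q"
  shows "\<exists>g h :: laurent_nat. irreducible g \<and> irreducible h \<and> f = g + h"
proof -
  obtain g h where f: "f = g + h" and g: "eval_at_one g = p"
    using eval_at_one_split[of p f] assms(3) by auto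
  with assms(3) have "eval_at_one h = q" by simp
  with g assms(1,2) f show ?thesis
    using irreducible_if_prime_eval_at_one by metis
qed

end
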